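(* Let $N\ge 1$ and let $-\infty<a_i\le b_i<\infty$ for $i=1,\dots,N$, with $r_i=(b_i-a_i)/2>0$ for all $i$. Let $\Theta=\prod_{i=1}^N[a_i,b_i]$ and $T(y)=\sum_{i=1}^N y_i$. Let $p$ be a sampling design on subsets of $\{1,\dots,N\}$ with inclusion probabilities $\pi_i=\mathbb P_p(i\in S)>0$ for all $i$. Then for any unbiased estimator $\delta$, \[ \sup_{y\in\Theta}R(\delta,p;y)\;\ge\;\sum_{i=1}^N r_i^2\,\frac{1-\pi_i}{\pi_i}. \]
   Context: A sampling design is a probability distribution $p$ on the subsets $s\subseteq\{1,\dots,N\}$; $S$ denotes the random sample drawn from $p$, $\mathbb P_p$ and $\mathbb E_p$ denote probability and expectation with respect to $p$. An estimator $\delta$ is a collection of measurable functions $\delta_s:\Theta_s\to\mathbb R$, one for each subset $s$, where $\Theta_s=\prod_{i\in s}[a_i,b_i]$ is the projection of $\Theta$ onto the coordinates in $s$; for $y\in\Theta$ write $y_s=(y_i)_{i\in s}$. The estimator is unbiased (for design $p$) if $\mathbb E_p[\delta_S(y_S)]=T(y)$ for all $y\in\Theta$. The risk is $R(\delta,p;y)=\mathbb E_p[(\delta_S(y_S)-T(y))^2]$. *)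

theory Defs
  imports "HOL-Probability.Probability"
begin

text \<open>An estimator is a family delta s of functions of the sampled values y_s;
  y_s is represented as the restriction of y to s (an extensional function on s).\<close>

definition Theta :: "nat \<Rightarrow> (nat \<Rightarrow> real) \<Rightarrow> (nat \<Rightarrow> real) \<Rightarrow> (nat \<Rightarrow> real) set" where
  "Theta N a b = PiE {1..N} (\<lambda>i. {a i..b i})"

definition total :: "nat \<Rightarrow> (nat \<Rightarrow> real) \<Rightarrow> real" where
  "total N y = (\<Sum>i=1..N. y i)"

definition sampling_design :: "nat \<Rightarrow> nat set pmf \<Rightarrow> bool" where
  "sampling_design N p \<longleftrightarrow> set_pmf p \<subseteq> Pow {1..N}"

definition incl_prob :: "nat set pmf \<Rightarrow> nat \<Rightarrow> real" where
  "incl_prob p i = measure_pmf.prob p {s. i \<in> s}"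

definition estimator :: "nat \<Rightarrow> (nat \<Rightarrow> real) \<Rightarrow> (nat \<Rightarrow> real)
    \<Rightarrow> (nat set \<Rightarrow> (nat \<Rightarrow> real) \<Rightarrow> real) \<Rightarrow> bool" where
  "estimator N a b \<delta> \<longleftrightarrow>
     (\<forall>s\<subseteq>{1..N}. \<delta> s \<in> borel_measurable (PiM s (\<lambda>i. restrict_space borel {a i..b i})))"

definition estimate :: "(nat set \<Rightarrow> (nat \<Rightarrow> real) \<Rightarrow> real) \<Rightarrow> nat set \<Rightarrow> (nat \<Rightarrow> real) \<Rightarrow> real" where
  "estimate \<delta> s y = \<delta> s (restrict y s)"

definition unbiased :: "nat \<Rightarrow> (nat \<Rightarrow> real) \<Rightarrow> (nat \<Rightarrow> real) \<Rightarrow> nat set pmf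
    \<Rightarrow> (nat set \<Rightarrow> (nat \<Rightarrow> real) \<Rightarrow> real) \<Rightarrow> bool" where
  "unbiased N a b p \<delta> \<longleftrightarrow>
     (\<forall>y\<in>Theta N a b. measure_pmf.expectation p (\<lambda>s. estimate \<delta> s y) = total N y)"

definition risk :: "nat \<Rightarrow> (nat set \<Rightarrow> (nat \<Rightarrow> real) \<Rightarrow> real) \<Rightarrow> nat set pmf \<Rightarrow> (nat \<Rightarrow> real) \<Rightarrow> real" where
  "risk N \<delta> p y = measure_pmf.expectation p (\<lambda>s. (estimate \<delta> s y - total N y)\<^sup>2)"

end

theory Submission imports Defs begin

text \<open>The supremum of the risk dominates its average over the \<open>2^N\<close> vertices of \<open>\<Theta>\<close>, indexed by
  the subsets \<open>U\<close> of \<open>{1..N}\<close>. Expand each \<open>\<delta>\<^sub>s\<close>, as a function of the vertex, in the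
  characters \<open>U \<mapsto> \<plusminus>1\<close> (according to \<open>i \<in> U\<close>). Since \<open>\<delta>\<^sub>s\<close> ignores the coordinates
  outside \<open>s\<close>, its \<open>i\<close>-th coefficient vanishes unless \<open>i \<in> s\<close>, while unbiasedness forces its
  expectation over \<open>S\<close> to be \<open>r\<^sub>i\<close>, the \<open>i\<close>-th coefficient of \<open>T\<close>. A random variable with mean
  \<open>r\<^sub>i\<close> that vanishes with probability \<open>1 - \<pi>\<^sub>i\<close> has mean square deviation at least
  \<open>r\<^sub>i\<^sup>2 (1 - \<pi>\<^sub>i) / \<pi>\<^sub>i\<close> from \<open>r\<^sub>i\<close>, and by Bessel's inequality the sum of these deviations
  over \<open>i\<close> is at most the average risk.\<close>

definition toggle :: "'a \<Rightarrow> 'a set \<Rightarrow> 'a set" where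
  "toggle i U = (if i \<in> U then U - {i} else insert i U)"

definition cube_sign :: "'a \<Rightarrow> 'a set \<Rightarrow> real" where
  "cube_sign i U = (if i \<in> U then 1 else -1)"

definition cube_coeff :: "'a set \<Rightarrow> ('a set \<Rightarrow> real) \<Rightarrow> 'a \<Rightarrow> real" where
  "cube_coeff I f i = (\<Sum>U\<in>Pow I. f U * cube_sign i U) / 2 ^ card I"

lemma toggle_toggle [simp]: "toggle i (toggle i U) = U"
  by (auto simp: toggle_def)

lemma cube_sign_toggle_same [simp]: "cube_sign i (toggle i U) = - cube_sign i U"
  by (simp add: cube_sign_def toggle_def)

lemma cube_sign_toggle_other [simp]: "j \<noteq> i \<Longrightarrow> cube_sign j (toggle i U) = cube_sign j U"
  by (simp add: cube_sign_def toggle_def)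

lemma sum_Pow_eq_0_if_toggle_odd:
  fixes f :: "'a set \<Rightarrow> real"
  assumes "i \<in> I" and odd: "\<And>U. U \<in> Pow I \<Longrightarrow> f (toggle i U) = - f U"
  shows "(\<Sum>U\<in>Pow I. f U) = 0"
proof -
  have "bij_betw (toggle i) (Pow I) (Pow I)"
    by (rule bij_betwI[where g = "toggle i"]) (use \<open>i \<in> I\<close> in \<open>auto simp: toggle_def split: if_splits\<close>)
  then have "(\<Sum>U\<in>Pow I. f U) = (\<Sum>U\<in>Pow I. f (toggle i U))"
    by (simp add: sum.reindex_bij_betw)
  also have "\<dots> = - (\<Sum>U\<in>Pow I. f U)"
    by (simp add: odd sum_negf)
  finally show ?thesis by simp
qed

lemma sum_cube_sign: "i \<in> I \<Longrightarrow> (\<Sum>U\<in>Pow I. cube_sign i U) = 0"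
  by (rule sum_Pow_eq_0_if_toggle_odd) auto

lemma cube_sign_orthogonal:
  assumes "finite I" "i \<in> I" "j \<in> I"
  shows "(\<Sum>U\<in>Pow I. cube_sign i U * cube_sign j U) = (if i = j then 2 ^ card I else 0)"
proof (cases "i = j")
  case True
  have "cube_sign i U * cube_sign i U = 1" for U
    by (simp add: cube_sign_def)
  with True show ?thesis using \<open>finite I\<close> by (simp add: card_Pow)
next
  case False
  then show ?thesis by (simp add: sum_Pow_eq_0_if_toggle_odd[OF \<open>i \<in> I\<close>])
qed

lemma cube_coeff_diff:
  "cube_coeff I (\<lambda>U. f U - g U) i = cube_coeff I f i - cube_coeff I g i"
  by (simp add: cube_coeff_def left_diff_distrib sum_subtractf diff_divide_distrib)

lemma cube_coeff_weighted_sum: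
  "cube_coeff I (\<lambda>U. \<Sum>s\<in>S. w s * f s U) i = (\<Sum>s\<in>S. w s * cube_coeff I (f s) i)"
  by (simp add: cube_coeff_def sum_distrib_left sum_distrib_right sum_divide_distrib
      sum.swap[of _ S] mult.assoc)

lemma cube_coeff_eq_0_if_toggle_invariant:
  assumes "i \<in> I" "\<And>U. f (toggle i U) = f U"
  shows "cube_coeff I f i = 0"
  unfolding cube_coeff_def using assms by (simp add: sum_Pow_eq_0_if_toggle_odd)

lemma cube_coeff_affine:
  assumes "finite I" "i \<in> I"
  shows "cube_coeff I (\<lambda>U. \<Sum>j\<in>I. c j + r j * cube_sign j U) i = r i"
proof -
  have "(\<Sum>U\<in>Pow I. (\<Sum>j\<in>I. c j + r j * cube_sign j U) * cube_sign i U)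
      = (\<Sum>j\<in>I. c j * (\<Sum>U\<in>Pow I. cube_sign i U)
                 + r j * (\<Sum>U\<in>Pow I. cube_sign j U * cube_sign i U))"
    by (simp add: sum_distrib_left sum_distrib_right sum.distrib sum.swap[of _ "Pow I"] algebra_simps)
  also have "\<dots> = (\<Sum>j\<in>I. r j * (if j = i then 2 ^ card I else 0))"
    using assms by (intro sum.cong refl) (simp add: sum_cube_sign cube_sign_orthogonal)
  also have "\<dots> = r i * 2 ^ card I"
    using assms by (simp add: if_distrib sum.delta cong: if_cong)
  finally show ?thesis by (simp add: cube_coeff_def)
qed

lemma bessel_inequality_sum:
  fixes x :: "'u \<Rightarrow> real" and e :: "'i \<Rightarrow> 'u \<Rightarrow> real"
  assumes "finite I" "M > 0"
    and orth: "\<And>i j. i \<in> I \<Longrightarrow> j \<in> I \<Longrightarrow> (\<Sum>u\<in>A. e i u * e j u) = (if i = j then M else 0)"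
  shows "(\<Sum>i\<in>I. ((\<Sum>u\<in>A. x u * e i u) / M)\<^sup>2) \<le> (\<Sum>u\<in>A. (x u)\<^sup>2) / M"
proof -
  define c where "c i = (\<Sum>u\<in>A. x u * e i u) / M" for i
  have xe: "(\<Sum>u\<in>A. x u * e i u) = M * c i" for i
    using \<open>M > 0\<close> by (simp add: c_def)
  have "0 \<le> (\<Sum>u\<in>A. (x u - (\<Sum>i\<in>I. c i * e i u))\<^sup>2)"
    by (simp add: sum_nonneg)
  also have "\<dots> = (\<Sum>u\<in>A. (x u)\<^sup>2) - 2 * (\<Sum>i\<in>I. c i * (\<Sum>u\<in>A. x u * e i u))
       + (\<Sum>i\<in>I. \<Sum>j\<in>I. c i * c j * (\<Sum>u\<in>A. e i u * e j u))"
    by (simp add: power2_eq_square algebra_simps sum.distrib sum_subtractf sum_distrib_left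
        sum_distrib_right sum.swap[of _ A])
  also have "\<dots> = (\<Sum>u\<in>A. (x u)\<^sup>2) - M * (\<Sum>i\<in>I. (c i)\<^sup>2)"
    using \<open>finite I\<close> by (simp add: xe orth sum_distrib_left power2_eq_square algebra_simps
        if_distrib sum.delta cong: if_cong)
  finally show ?thesis
    using \<open>M > 0\<close> by (simp add: c_def[symmetric] field_simps)
qed

lemma bessel_cube:
  assumes "finite I"
  shows "(\<Sum>i\<in>I. (cube_coeff I f i)\<^sup>2) \<le> (\<Sum>U\<in>Pow I. (f U)\<^sup>2) / 2 ^ card I"
  unfolding cube_coeff_def
  using assms by (intro bessel_inequality_sum) (simp_all add: cube_sign_orthogonal)

lemma weighted_Cauchy_Schwarz:
  fixes w x :: "'a \<Rightarrow> real"
  assumes "\<And>s. s \<in> A \<Longrightarrow> w s \<ge> 0"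
  shows "(\<Sum>s\<in>A. w s * x s)\<^sup>2 \<le> (\<Sum>s\<in>A. w s) * (\<Sum>s\<in>A. w s * (x s)\<^sup>2)"
proof -
  have "(\<Sum>s\<in>A. w s * x s) = (\<Sum>s\<in>A. sqrt (w s) * (sqrt (w s) * x s))"
    using assms by (intro sum.cong refl) (simp flip: mult.assoc)
  also have "\<dots>\<^sup>2 \<le> (\<Sum>s\<in>A. (sqrt (w s))\<^sup>2) * (\<Sum>s\<in>A. (sqrt (w s) * x s)\<^sup>2)"
    by (rule Cauchy_Schwarz_ineq_sum)
  also have "\<dots> = (\<Sum>s\<in>A. w s) * (\<Sum>s\<in>A. w s * (x s)\<^sup>2)"
    using assms by (simp add: power_mult_distrib)
  finally show ?thesis .
qed

lemma mean_sq_error_ge_if_zero_outside: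
  fixes w g :: "'s \<Rightarrow> real"
  assumes "finite S" "A \<subseteq> S" and w_nonneg: "\<And>s. s \<in> S \<Longrightarrow> w s \<ge> 0"
    and w_sum: "(\<Sum>s\<in>S. w s) = 1"
    and \<pi>_eq: "\<pi> = (\<Sum>s\<in>A. w s)" and "\<pi> > 0"
    and zero: "\<And>s. s \<in> S - A \<Longrightarrow> g s = 0"
    and mean: "(\<Sum>s\<in>S. w s * g s) = r"
  shows "r\<^sup>2 * (1 - \<pi>) / \<pi> \<le> (\<Sum>s\<in>S. w s * (g s - r)\<^sup>2)"
proof -
  have split: "(\<Sum>s\<in>S. f s) = (\<Sum>s\<in>A. f s) + (\<Sum>s\<in>S - A. f s)" for f :: "'s \<Rightarrow> real"
    using sum.subset_diff[OF \<open>A \<subseteq> S\<close> \<open>finite S\<close>] by (simp add: add.commute)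
  have "(\<Sum>s\<in>S - A. w s) = 1 - \<pi>"
    using split[of w] w_sum \<pi>_eq by simp
  then have outside: "(\<Sum>s\<in>S - A. w s * (g s - r)\<^sup>2) = r\<^sup>2 * (1 - \<pi>)"
    using zero by (simp add: sum_distrib_right[symmetric] mult.commute)
  have "(\<Sum>s\<in>A. w s * g s) = r"
    using split[of "\<lambda>s. w s * g s"] mean zero by simp
  then have "(\<Sum>s\<in>A. w s * (g s - r)) = r - \<pi> * r"
    using \<pi>_eq by (simp add: right_diff_distrib sum_subtractf sum_distrib_right)
  then have "(r - \<pi> * r)\<^sup>2 \<le> \<pi> * (\<Sum>s\<in>A. w s * (g s - r)\<^sup>2)"
    using weighted_Cauchy_Schwarz[of A w "\<lambda>s. g s - r"] w_nonneg \<open>A \<subseteq> S\<close> \<pi>_eq by auto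
  moreover have "r\<^sup>2 * (1 - \<pi>) / \<pi> = (r - \<pi> * r)\<^sup>2 / \<pi> + r\<^sup>2 * (1 - \<pi>)"
    using \<open>\<pi> > 0\<close> by (simp add: field_simps power2_eq_square)
  ultimately show ?thesis
    using split[of "\<lambda>s. w s * (g s - r)\<^sup>2"] outside \<open>\<pi> > 0\<close>
    by (simp add: divide_le_eq mult.commute)
qed

lemma cube_average_mean_sq_error_ge:
  fixes I :: "'a set" and S :: "'a set set" and w :: "'a set \<Rightarrow> real"
    and d :: "'a set \<Rightarrow> 'a set \<Rightarrow> real" and T :: "'a set \<Rightarrow> real"
  assumes "finite I" "finite S" and w_nonneg: "\<And>s. s \<in> S \<Longrightarrow> w s \<ge> 0"
    and w_sum: "(\<Sum>s\<in>S. w s) = 1"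
    and unbiased: "\<And>U. U \<subseteq> I \<Longrightarrow> (\<Sum>s\<in>S. w s * d s U) = T U"
    and coeff_T: "\<And>i. i \<in> I \<Longrightarrow> cube_coeff I T i = r i"
    and local: "\<And>s i U. s \<in> S \<Longrightarrow> i \<in> I \<Longrightarrow> i \<notin> s \<Longrightarrow> d s (toggle i U) = d s U"
    and incl: "\<And>i. i \<in> I \<Longrightarrow> \<pi> i = (\<Sum>s\<in>{s\<in>S. i \<in> s}. w s)"
    and incl_pos: "\<And>i. i \<in> I \<Longrightarrow> \<pi> i > 0"
  shows "(\<Sum>i\<in>I. (r i)\<^sup>2 * (1 - \<pi> i) / \<pi> i)
           \<le> (\<Sum>U\<in>Pow I. \<Sum>s\<in>S. w s * (d s U - T U)\<^sup>2) / 2 ^ card I"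
proof -
  define g where "g s = cube_coeff I (d s)" for s
  have g_mean: "(\<Sum>s\<in>S. w s * g s i) = r i" if "i \<in> I" for i
  proof -
    have "(\<Sum>s\<in>S. w s * g s i) = cube_coeff I (\<lambda>U. \<Sum>s\<in>S. w s * d s U) i"
      by (simp add: g_def cube_coeff_weighted_sum)
    also have "\<dots> = cube_coeff I T i"
      unfolding cube_coeff_def by (simp add: unbiased)
    finally show ?thesis using coeff_T that by simp
  qed
  have per_unit: "(r i)\<^sup>2 * (1 - \<pi> i) / \<pi> i \<le> (\<Sum>s\<in>S. w s * (g s i - r i)\<^sup>2)"
    if "i \<in> I" for i
    using \<open>finite S\<close> w_nonneg w_sum incl[OF that] incl_pos[OF that] g_mean[OF that] that
    by (intro mean_sq_error_ge_if_zero_outside[where A = "{s\<in>S. i \<in> s}"])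
       (auto simp: g_def local cube_coeff_eq_0_if_toggle_invariant)
  have per_sample: "(\<Sum>i\<in>I. (g s i - r i)\<^sup>2) \<le> (\<Sum>U\<in>Pow I. (d s U - T U)\<^sup>2) / 2 ^ card I" for s
  proof -
    have "(\<Sum>i\<in>I. (g s i - r i)\<^sup>2) = (\<Sum>i\<in>I. (cube_coeff I (\<lambda>U. d s U - T U) i)\<^sup>2)"
      by (simp add: g_def cube_coeff_diff coeff_T)
    also have "\<dots> \<le> (\<Sum>U\<in>Pow I. (d s U - T U)\<^sup>2) / 2 ^ card I"
      using \<open>finite I\<close> by (rule bessel_cube)
    finally show ?thesis .
  qed
  have "(\<Sum>i\<in>I. (r i)\<^sup>2 * (1 - \<pi> i) / \<pi> i) \<le> (\<Sum>i\<in>I. \<Sum>s\<in>S. w s * (g s i - r i)\<^sup>2)"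
    by (intro sum_mono per_unit)
  also have "\<dots> = (\<Sum>s\<in>S. w s * (\<Sum>i\<in>I. (g s i - r i)\<^sup>2))"
    by (simp add: sum.swap[of _ I] sum_distrib_left)
  also have "\<dots> \<le> (\<Sum>s\<in>S. w s * ((\<Sum>U\<in>Pow I. (d s U - T U)\<^sup>2) / 2 ^ card I))"
    by (intro sum_mono mult_left_mono per_sample w_nonneg)
  also have "\<dots> = (\<Sum>U\<in>Pow I. \<Sum>s\<in>S. w s * (d s U - T U)\<^sup>2) / 2 ^ card I"
    by (simp add: sum_distrib_left sum_divide_distrib sum.swap[of _ S])
  finally show ?thesis .
qed

lemma ex_ge_average:
  fixes f :: "'a \<Rightarrow> real"
  assumes "finite A" "A \<noteq> {}"
  obtains x where "x \<in> A" "sum f A / card A \<le> f x"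
proof (rule ccontr)
  assume "\<not> thesis"
  then have "\<And>x. x \<in> A \<Longrightarrow> f x < sum f A / card A"
    using that by (meson not_le)
  then have "sum f A < card A * (sum f A / card A)"
    using assms by (intro sum_bounded_above_strict) auto
  then show False
    using assms by simp
qed

lemma expectation_pmf_eq_sum:
  assumes "finite S" "set_pmf p \<subseteq> S"
  shows "measure_pmf.expectation p f = (\<Sum>s\<in>S. pmf p s * f s)"
  using assms by (subst integral_measure_pmf_real[OF \<open>finite S\<close>]) (auto simp: mult.commute)

lemma incl_prob_eq_sum:
  assumes "finite S" "set_pmf p \<subseteq> S"
  shows "incl_prob p i = (\<Sum>s\<in>{s\<in>S. i \<in> s}. pmf p s)"
proof -
  have "{s. i \<in> s} \<inter> set_pmf p = {s\<in>S. i \<in> s} \<inter> set_pmf p"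
    using assms by auto
  then have "incl_prob p i = measure_pmf.prob p {s\<in>S. i \<in> s}"
    unfolding incl_prob_def by (metis measure_Int_set_pmf)
  then show ?thesis
    using assms by (simp add: measure_measure_pmf_finite)
qed

definition vertex :: "nat \<Rightarrow> (nat \<Rightarrow> real) \<Rightarrow> (nat \<Rightarrow> real) \<Rightarrow> nat set \<Rightarrow> nat \<Rightarrow> real" where
  "vertex N a b U = restrict (\<lambda>i. if i \<in> U then b i else a i) {1..N}"

lemma vertex_in_Theta: "(\<And>i. i \<in> {1..N} \<Longrightarrow> a i \<le> b i) \<Longrightarrow> vertex N a b U \<in> Theta N a b"
  by (auto simp: vertex_def Theta_def)

lemma estimate_vertex_toggle:
  "i \<notin> s \<Longrightarrow> estimate \<delta> s (vertex N a b (toggle i U)) = estimate \<delta> s (vertex N a b U)"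
  unfolding estimate_def by (rule arg_cong[where f = "\<delta> s"]) (auto simp: vertex_def toggle_def)

lemma cube_coeff_total_vertex:
  assumes "i \<in> {1..N}"
  shows "cube_coeff {1..N} (\<lambda>U. total N (vertex N a b U)) i = (b i - a i) / 2"
proof -
  have affine: "(\<lambda>U. total N (vertex N a b U))
      = (\<lambda>U. \<Sum>j\<in>{1..N}. (a j + b j) / 2 + (b j - a j) / 2 * cube_sign j U)"
    unfolding total_def by (intro ext sum.cong refl) (simp add: vertex_def cube_sign_def field_simps)
  show ?thesis
    unfolding affine by (rule cube_coeff_affine[OF finite_atLeastAtMost assms])
qed

theorem theorem1:
  fixes N :: nat and a b :: "nat \<Rightarrow> real" and p :: "nat set pmf"
    and \<delta> :: "nat set \<Rightarrow> (nat \<Rightarrow> real) \<Rightarrow> real"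
  assumes "N \<ge> 1"
    and "\<forall>i\<in>{1..N}. (b i - a i) / 2 > 0"
    and "sampling_design N p"
    and "\<forall>i\<in>{1..N}. incl_prob p i > 0"
    and "estimator N a b \<delta>"
    and "unbiased N a b p \<delta>"
  shows "(SUP y\<in>Theta N a b. ereal (risk N \<delta> p y))
           \<ge> ereal (\<Sum>i=1..N. ((b i - a i) / 2)\<^sup>2 * (1 - incl_prob p i) / incl_prob p i)"
proof -
  \<comment> \<open>The design is discrete.\<close>
  define I where "I = {1..N}"
  have fin: "finite (Pow I)"
    by (simp add: I_def)
  have supp: "set_pmf p \<subseteq> Pow I"
    using assms(3) by (simp add: sampling_design_def I_def)
  have vertex_in: "vertex N a b U \<in> Theta N a b" for U
    using assms(2) by (intro vertex_in_Theta) force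
  have "(\<Sum>i\<in>I. ((b i - a i) / 2)\<^sup>2 * (1 - incl_prob p i) / incl_prob p i)
      \<le> (\<Sum>U\<in>Pow I. risk N \<delta> p (vertex N a b U)) / 2 ^ card I"
    unfolding risk_def expectation_pmf_eq_sum[OF fin supp]
  proof (rule cube_average_mean_sq_error_ge)
    show "(\<Sum>s\<in>Pow I. pmf p s * estimate \<delta> s (vertex N a b U)) = total N (vertex N a b U)" for U
      using assms(6) vertex_in by (simp add: unbiased_def expectation_pmf_eq_sum[OF fin supp])
    show "incl_prob p i = (\<Sum>s\<in>{s\<in>Pow I. i \<in> s}. pmf p s)" for i
      by (rule incl_prob_eq_sum[OF fin supp])
    show "cube_coeff I (\<lambda>U. total N (vertex N a b U)) i = (b i - a i) / 2" if "i \<in> I" for i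
      using that unfolding I_def by (rule cube_coeff_total_vertex)
  qed (use assms(4) fin supp in \<open>auto simp: I_def sum_pmf_eq_1 estimate_vertex_toggle\<close>)
  moreover obtain U where "(\<Sum>U\<in>Pow I. risk N \<delta> p (vertex N a b U)) / 2 ^ card I
      \<le> risk N \<delta> p (vertex N a b U)"
    using ex_ge_average[OF fin, of "\<lambda>U. risk N \<delta> p (vertex N a b U)"] fin
    by (auto simp: card_Pow)
  ultimately show ?thesis
    using SUP_upper[OF vertex_in, of "\<lambda>y. ereal (risk N \<delta> p y)"] unfolding I_def
    by (meson ereal_less_eq(3) order_trans)
qed

end
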